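(* Let $\mathfrak P$ be a prime ideal of $\mathcal O$ over $\mathfrak p$, $f_\mathfrak P\in\hat A_\mathfrak p[x]$ the corresponding monic irreducible factor of $f$, $n_\mathfrak P=\deg f_\mathfrak P$, and $\theta_\mathfrak P$ a root of $f_\mathfrak P$ in an algebraic closure $\overline{K}_\mathfrak p$. Let $0\le i<j<n_\mathfrak P$ and let $g_i,g_j\in\hat A_\mathfrak p[x]$ be divisor polynomials of $f_\mathfrak P$ of degrees $i$ and $j$ respectively. Then $$\hat v(g_j(\theta_\mathfrak P))\ \ge\ \hat v(g_i(\theta_\mathfrak P)).$$
   Context: Let $A$ be a Dedekind domain with fraction field $K$, $\mathfrak p$ a nonzero prime ideal of $A$ with discrete valuation $v_\mathfrak p$, $K_\mathfrak p$ the completion of $K$ at $\mathfrak p$, $\hat A_\mathfrak p$ its valuation ring, and $\hat v$ the unique extension of $v_\mathfrak p$ to an algebraic closure $\overline K_\mathfrak p$. Let $f\in A[x]$ be monic, irreducible and separable, $\theta$ a root of $f$, $L=K(\theta)$ and $\mathcal O$ the integral closure of $A$ in $L$. The prime ideals $\mathfrak P$ of $\mathcal O$ over $\mathfrak p$ correspond bijectively to the monic irreducible factors $f_\mathfrak P$ of $f$ in $\hat A_\mathfrak p[x]$. For $g=\sum c_kx^k\in K_\mathfrak p[x]$ put $v_0(g)=\min_k v_\mathfrak p(c_k)$. For $0\le m<n_\mathfrak P$, a divisor polynomial of degree $m$ of $f_\mathfrak P$ is a monic $g_m\in\hat A_\mathfrak p[x]$ of degree $m$ such that $\hat v(g_m(\theta_\mathfrak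 P))\ge \hat v(g(\theta_\mathfrak P))-v_0(g)$ for every $g\in\hat A_\mathfrak p[x]$ of degree $m$ (this condition does not depend on the choice of the root $\theta_\mathfrak P$). *)

theory Defs
  imports "HOL-Computational_Algebra.Polynomial" "HOL-Library.Extended_Real"
begin

definition valuation :: "('a::field \<Rightarrow> ereal) \<Rightarrow> bool" where
  "valuation w \<longleftrightarrow>
     (\<forall>x. w x = \<infinity> \<longleftrightarrow> x = 0) \<and> (\<forall>x. w x \<noteq> -\<infinity>) \<and>
     (\<forall>x y. w (x * y) = w x + w y) \<and>
     (\<forall>x y. min (w x) (w y) \<le> w (x + y))"

definition discrete_valuation :: "('a::field \<Rightarrow> ereal) \<Rightarrow> bool" where
  "discrete_valuation v \<longleftrightarrow> valuation v \<and>
     v ` (UNIV - {0}) = range (\<lambda>k::int. ereal (of_int k))"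

definition complete_wrt :: "('a::field \<Rightarrow> ereal) \<Rightarrow> bool" where
  "complete_wrt v \<longleftrightarrow>
     (\<forall>x::nat \<Rightarrow> 'a.
        (\<forall>N::int. \<exists>M. \<forall>m\<ge>M. \<forall>n\<ge>M. ereal (of_int N) \<le> v (x m - x n)) \<longrightarrow>
        (\<exists>l. \<forall>N::int. \<exists>M. \<forall>n\<ge>M. ereal (of_int N) \<le> v (x n - l)))"

definition val_ring :: "('a::field \<Rightarrow> ereal) \<Rightarrow> 'a set" where
  "val_ring v = {a. 0 \<le> v a}"

definition poly_over :: "'a set \<Rightarrow> 'a::zero poly \<Rightarrow> bool" where
  "poly_over R g \<longleftrightarrow> (\<forall>k. coeff g k \<in> R)"

definition irreducible_over :: "'a::comm_ring_1 set \<Rightarrow> 'a poly \<Rightarrow> bool" where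
  "irreducible_over R p \<longleftrightarrow> poly_over R p \<and> p \<noteq> 0 \<and>
     \<not> (\<exists>u. poly_over R u \<and> p * u = 1) \<and>
     (\<forall>a b. poly_over R a \<and> poly_over R b \<and> p = a * b \<longrightarrow>
        (\<exists>u. poly_over R u \<and> a * u = 1) \<or> (\<exists>u. poly_over R u \<and> b * u = 1))"

definition v0 :: "('a::field \<Rightarrow> ereal) \<Rightarrow> 'a poly \<Rightarrow> ereal" where
  "v0 v g = Min ((\<lambda>k. v (coeff g k)) ` {..degree g})"

definition field_embedding :: "('a::field \<Rightarrow> 'b::field) \<Rightarrow> bool" where
  "field_embedding \<iota> \<longleftrightarrow> inj \<iota> \<and> \<iota> 0 = 0 \<and> \<iota> 1 = 1 \<and>
     (\<forall>x y. \<iota> (x + y) = \<iota> x + \<iota> y) \<and> (\<forall>x y. \<iota> (x * y) = \<iota> x * \<iota> y)"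

definition is_algebraic_closure :: "('a::field \<Rightarrow> 'b::field) \<Rightarrow> bool" where
  "is_algebraic_closure \<iota> \<longleftrightarrow> field_embedding \<iota> \<and>
     (\<forall>p::'b poly. 0 < degree p \<longrightarrow> (\<exists>z. poly p z = 0)) \<and>
     (\<forall>z::'b. \<exists>q::'a poly. q \<noteq> 0 \<and> poly (map_poly \<iota> q) z = 0)"

definition divisor_polynomial ::
  "('a::field \<Rightarrow> ereal) \<Rightarrow> ('b::field \<Rightarrow> ereal) \<Rightarrow> ('a \<Rightarrow> 'b) \<Rightarrow> 'a poly \<Rightarrow> 'b
     \<Rightarrow> nat \<Rightarrow> 'a poly \<Rightarrow> bool" where
  "divisor_polynomial v vhat \<iota> fP \<theta> m g \<longleftrightarrow>
     m < degree fP \<and> poly_over (val_ring v) g \<and> lead_coeff g = 1 \<and> degree g = m \<and>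
     (\<forall>h. poly_over (val_ring v) h \<and> h \<noteq> 0 \<and> degree h = m \<longrightarrow>
        vhat (poly (map_poly \<iota> h) \<theta>) - v0 v h \<le> vhat (poly (map_poly \<iota> g) \<theta>))"

end

theory Submission
  imports Defs
begin

text \<open>Multiplying the monic integral polynomial g_i of degree i by x^(j-i) gives a monic integral
polynomial h of degree j; as v_0(h) = 0, the defining inequality of g_j yields
v(h(\<theta>)) \<le> v(g_j(\<theta>)). But v(h(\<theta>)) = (j - i) v(\<theta>) + v(g_i(\<theta>)), and v(\<theta>) \<ge> 0 because \<theta>
is a root of the monic integral polynomial f_P.\<close>

lemma valuation_zero: "valuation w \<Longrightarrow> w 0 = \<infinity>"
  unfolding valuation_def by blast

lemma valuation_mult: "valuation w \<Longrightarrow> w (x * y) = w x + w y"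
  unfolding valuation_def by blast

lemma valuation_finite: "valuation w \<Longrightarrow> x \<noteq> 0 \<Longrightarrow> \<exists>r. w x = ereal r"
  unfolding valuation_def by (cases "w x") auto

lemma valuation_one:
  assumes "valuation w" shows "w 1 = 0"
proof -
  obtain r where r: "w 1 = ereal r" using valuation_finite[OF assms] by fastforce
  have "w 1 = w 1 + w 1" using valuation_mult[OF assms, of 1 1] by simp
  with r show ?thesis by (simp add: zero_ereal_def)
qed

lemma valuation_minus:
  assumes "valuation w" shows "w (- x) = w x"
proof -
  obtain r where r: "w (-1) = ereal r" using valuation_finite[OF assms] by fastforce
  have "w 1 = w (-1) + w (-1)" using valuation_mult[OF assms, of "-1" "-1"] by simp
  with r valuation_one[OF assms] have "w (-1) = 0" by (simp add: zero_ereal_def)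
  then show ?thesis using valuation_mult[OF assms, of "-1" x] by simp
qed

lemma valuation_sum_ge:
  assumes "valuation w" "finite A" "\<And>k. k \<in> A \<Longrightarrow> B \<le> w (f k)"
  shows "B \<le> w (sum f A)"
  using assms(2,3)
proof (induction A rule: finite_induct)
  case empty
  then show ?case using valuation_zero[OF assms(1)] by simp
next
  case (insert x F)
  have "min (w (f x)) (w (sum f F)) \<le> w (f x + sum f F)"
    using assms(1) unfolding valuation_def by blast
  moreover have "B \<le> min (w (f x)) (w (sum f F))" using insert by auto
  ultimately have "B \<le> w (f x + sum f F)" by (rule order_trans[rotated])
  then show ?case using insert.hyps by simp
qed

lemma valuation_power:
  assumes "valuation w" "w x = ereal t" shows "w (x ^ m) = ereal (real m * t)"
proof (induction m)
  case 0 then show ?case using valuation_one[OF assms(1)] by (simp add: zero_ereal_def)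
next
  case (Suc m) then show ?case
    using valuation_mult[OF assms(1), of x "x ^ m"] assms(2) by (simp add: algebra_simps)
qed

lemma valuation_power_nonneg:
  assumes "valuation w" "0 \<le> w x" shows "0 \<le> w (x ^ m)"
  using valuation_mult[OF assms(1)] valuation_one[OF assms(1)] assms(2)
  by (induction m) simp_all

text \<open>If w(x) = t < 0, the leading term x^n has value n t while all other terms have value
at least (n - 1) t > n t, so they cannot cancel it.\<close>
lemma root_of_monic_integral_poly_integral:
  assumes w: "valuation w" and po: "poly_over (val_ring w) f" and mon: "lead_coeff f = 1"
    and deg: "0 < degree f" and root: "poly f x = 0"
  shows "0 \<le> w x"
proof (rule ccontr)
  assume neg: "\<not> 0 \<le> w x"
  then have "x \<noteq> 0" using valuation_zero[OF w] by auto
  then obtain t where t: "w x = ereal t" using valuation_finite[OF w] by blast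
  with neg have t_neg: "t < 0" by (simp add: zero_ereal_def)
  define n where "n = degree f"
  have "poly f x = (\<Sum>k<n. coeff f k * x ^ k) + x ^ n"
    using mon by (simp add: poly_altdef n_def lessThan_Suc_atMost[symmetric])
  then have "x ^ n = - (\<Sum>k<n. coeff f k * x ^ k)"
    using root by (simp add: eq_neg_iff_add_eq_0 add.commute)
  then have lead: "w (x ^ n) = w (\<Sum>k<n. coeff f k * x ^ k)"
    by (simp add: valuation_minus[OF w])
  have "ereal (real (n - 1) * t) \<le> w (\<Sum>k<n. coeff f k * x ^ k)"
  proof (rule valuation_sum_ge[OF w])
    fix k assume k: "k \<in> {..<n}"
    have "0 \<le> w (coeff f k)" using po unfolding poly_over_def val_ring_def by auto
    moreover have "real (n - 1) * t \<le> real k * t"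
      using k t_neg by (intro mult_right_mono_neg) auto
    ultimately show "ereal (real (n - 1) * t) \<le> w (coeff f k * x ^ k)"
      using valuation_mult[OF w] valuation_power[OF w t]
      by (metis add_mono ereal_less_eq(3) add_0)
  qed auto
  then have "real (n - 1) * t \<le> real n * t"
    using lead valuation_power[OF w t] by (metis ereal_less_eq(3))
  with deg t_neg show False by (simp add: n_def algebra_simps of_nat_diff)
qed

lemma field_embedding_coeff_map_poly:
  "field_embedding \<iota> \<Longrightarrow> coeff (map_poly \<iota> p) k = \<iota> (coeff p k)"
  unfolding field_embedding_def by (simp add: coeff_map_poly)

lemma field_embedding_degree_map_poly:
  assumes "field_embedding \<iota>" shows "degree (map_poly \<iota> p) = degree p"
  using assms unfolding field_embedding_def by (metis degree_map_poly injD)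

lemma poly_over_val_ring_map_poly:
  assumes "field_embedding \<iota>" "\<forall>a. w (\<iota> a) = v a" "poly_over (val_ring v) p"
  shows "poly_over (val_ring w) (map_poly \<iota> p)"
  using assms by (simp add: poly_over_def val_ring_def field_embedding_coeff_map_poly)

lemma map_poly_monom_mult:
  assumes "field_embedding \<iota>"
  shows "map_poly \<iota> (monom 1 m * p) = monom 1 m * map_poly \<iota> p"
  using assms unfolding field_embedding_def
  by (intro poly_eqI) (simp add: coeff_map_poly coeff_monom_mult)

lemma poly_over_monom_mult:
  fixes p :: "'a::comm_semiring_1 poly"
  shows "0 \<in> R \<Longrightarrow> poly_over R p \<Longrightarrow> poly_over R (monom 1 m * p)"
  unfolding poly_over_def by (auto simp: coeff_monom_mult)

lemma v0_monic_integral: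
  assumes "valuation v" "poly_over (val_ring v) g" "lead_coeff g = 1"
  shows "v0 v g = 0"
  unfolding v0_def
proof (rule Min_eqI)
  show "0 \<in> (\<lambda>k. v (coeff g k)) ` {..degree g}"
    using assms(3) valuation_one[OF assms(1)] by force
qed (use assms(2) in \<open>auto simp: poly_over_def val_ring_def\<close>)

lemma divisor_polynomial_max_monic:
  assumes "divisor_polynomial v vhat \<iota> fP \<theta> m g" "valuation v"
    and "poly_over (val_ring v) h" "lead_coeff h = 1" "degree h = m"
  shows "vhat (poly (map_poly \<iota> h) \<theta>) \<le> vhat (poly (map_poly \<iota> g) \<theta>)"
proof -
  have "h \<noteq> 0" using assms(4) by auto
  then have "vhat (poly (map_poly \<iota> h) \<theta>) - v0 v h \<le> vhat (poly (map_poly \<iota> g) \<theta>)"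
    using assms unfolding divisor_polynomial_def by blast
  then show ?thesis by (simp add: v0_monic_integral[OF assms(2-4)])
qed

theorem mainTheorem1:
  fixes v :: "'k::field \<Rightarrow> ereal" and vhat :: "'l::field \<Rightarrow> ereal"
    and \<iota> :: "'k \<Rightarrow> 'l" and fP gi gj :: "'k poly" and \<theta> :: 'l and i j :: nat
  assumes "discrete_valuation v" and "complete_wrt v"
    and "is_algebraic_closure \<iota>"
    and "valuation vhat" and "\<forall>a. vhat (\<iota> a) = v a"
    and "lead_coeff fP = 1" and "irreducible_over (val_ring v) fP"
    and "poly (map_poly \<iota> fP) \<theta> = 0"
    and "i < j" and "j < degree fP"
    and "divisor_polynomial v vhat \<iota> fP \<theta> i gi"
    and "divisor_polynomial v vhat \<iota> fP \<theta> j gj"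
  shows "vhat (poly (map_poly \<iota> gi) \<theta>) \<le> vhat (poly (map_poly \<iota> gj) \<theta>)"
proof -
  have v: "valuation v" using assms(1) by (simp add: discrete_valuation_def)
  have \<iota>: "field_embedding \<iota>" using assms(3) by (simp add: is_algebraic_closure_def)
  have "0 \<le> vhat \<theta>"
    using assms(4-10) \<iota> poly_over_val_ring_map_poly[OF \<iota> assms(5)]
    by (intro root_of_monic_integral_poly_integral)
      (auto simp: irreducible_over_def field_embedding_degree_map_poly
        field_embedding_coeff_map_poly field_embedding_def)
  then have \<theta>_pow: "0 \<le> vhat (\<theta> ^ (j - i))" by (rule valuation_power_nonneg[OF assms(4)])
  have gi: "poly_over (val_ring v) gi" "lead_coeff gi = 1" "degree gi = i" "gi \<noteq> 0"
    using assms(11) by (auto simp: divisor_polynomial_def)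
  define h where "h = monom 1 (j - i) * gi"
  have "poly_over (val_ring v) h"
    using gi valuation_zero[OF v] by (auto simp: h_def val_ring_def intro: poly_over_monom_mult)
  moreover have "lead_coeff h = 1"
    using gi by (simp only: h_def lead_coeff_mult lead_coeff_monom mult_1)
  moreover have "degree h = j"
    using gi assms(9) by (simp add: h_def degree_mult_eq degree_monom_eq)
  ultimately have "vhat (poly (map_poly \<iota> h) \<theta>) \<le> vhat (poly (map_poly \<iota> gj) \<theta>)"
    using divisor_polynomial_max_monic[OF assms(12) v] by blast
  then have "vhat (\<theta> ^ (j - i)) + vhat (poly (map_poly \<iota> gi) \<theta>) \<le> vhat (poly (map_poly \<iota> gj) \<theta>)"
    by (simp add: h_def map_poly_monom_mult[OF \<iota>] poly_monom valuation_mult[OF assms(4)])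
  moreover have "vhat (poly (map_poly \<iota> gi) \<theta>) \<le> vhat (\<theta> ^ (j - i)) + vhat (poly (map_poly \<iota> gi) \<theta>)"
    using \<theta>_pow by (simp add: add_increasing)
  ultimately show ?thesis by (rule order_trans[rotated])
qed

end
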